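(* Let $\mathbf{S}=(S_n:n\ge1)\sim L(2,2,p)$ with $p=\sqrt2-1$, and let $x$ be a positive integer. Then $$\mathbb{P}(S_n\ge x\text{ for some }n\ge1)=\mathbb{P}(S_n\le -x\text{ for some }n\ge1)=1.$$
   Context: Ladder chain: let $\xi_1,\xi_2,\dots$ be i.i.d. with values in $\{1,-1\}$, $\mathbb{P}(\xi_i=1)=p$, $\mathbb{P}(\xi_i=-1)=1-p$, and let $r,s$ be positive integers. Define $X_k=-1$ if $\xi_k=-1$; $X_k=s$ if $k\ge r$ and $\xi_k=\xi_{k-1}=\dots=\xi_{k-r+1}=1$; and $X_k=1$ otherwise. Let $S_n=X_1+\dots+X_n$. The process $\mathbf{S}=(S_n:n\ge1)$ is called a ladder chain of order $r$, step $s$ and probability $p$, written $\mathbf{S}\sim L(r,s,p)$. Thus for $L(2,2,p)$: $X_k=-1$ if $\xi_k=-1$, $X_k=2$ if $\xi_k=\xi_{k-1}=1$ ($k\ge2$), and $X_k=1$ otherwise. *)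

theory Defs
  imports "HOL-Probability.Probability"
begin

text \<open>The i.i.d. sequence xi_1, xi_2, ... is modelled as a stream w of booleans,
  xi_k = 1 iff w !! (k - 1), under the product measure of Bernoulli(p).\<close>

definition xi_seq :: "real \<Rightarrow> bool stream measure" where
  "xi_seq p = stream_space (measure_pmf (bernoulli_pmf p))"

definition ladder_X :: "nat \<Rightarrow> int \<Rightarrow> bool stream \<Rightarrow> nat \<Rightarrow> int" where
  "ladder_X r s w k =
     (if \<not> w !! (k - 1) then -1
      else if k \<ge> r \<and> (\<forall>j<r. w !! (k - 1 - j)) then s
      else 1)"

definition ladder_S :: "nat \<Rightarrow> int \<Rightarrow> bool stream \<Rightarrow> nat \<Rightarrow> int" where
  "ladder_S r s w n = (\<Sum>k=1..n. ladder_X r s w k)"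

end

theory Submission
  imports Defs
begin

text \<open>The pair (S_n, xi_n) is a Markov chain, and for p = sqrt 2 - 1, i.e. p^2 + 2p = 1, the function
  m(s, b) = s + p [b] is harmonic for it, so m(S_n, xi_n) is a martingale with bounded increments.
  Optional stopping on the interval (-x, M), carried out on finite horizons, shows that the chain
  reaches -x before leaving the interval upwards with probability at least 1 - x/(M + x), up to the
  probability of staying in the interval forever; the latter is zero because any run of M + x failures
  leaves it. Letting M tend to infinity gives probability 1. The level x is reached in the same way
  from the harmonic function x + 2 - m, the extra 2 absorbing the overshoot of a ladder step.\<close>

definition ladder_incr :: "bool \<Rightarrow> bool \<Rightarrow> int" where
  "ladder_incr b c = (if c then if b then 2 else 1 else -1)"

text \<open>The chain started at level s with previous coin b; ladder_S 2 2 starts at 0 with b = False.\<close>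

primrec ladder_walk :: "int \<Rightarrow> bool \<Rightarrow> bool stream \<Rightarrow> nat \<Rightarrow> int" where
  "ladder_walk s b w 0 = s"
| "ladder_walk s b w (Suc n) = ladder_walk (s + ladder_incr b (shd w)) (shd w) (stl w) n"

lemma ladder_walk_Suc:
  "ladder_walk s b w (Suc n) = ladder_walk s b w n + ladder_incr ((b ## w) !! n) (w !! n)"
proof (induction n arbitrary: s b w)
  case (Suc n)
  show ?case
    using Suc.IH[of "s + ladder_incr b (shd w)" "shd w" "stl w"] by (cases n) simp_all
qed simp

lemma ladder_S_eq_walk: "ladder_S 2 2 w n = ladder_walk 0 False w n"
proof (induction n)
  case 0
  show ?case by (simp add: ladder_S_def)
next
  case (Suc n)
  have "ladder_X 2 2 w (Suc n) = ladder_incr ((False ## w) !! n) (w !! n)"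
    by (cases n) (auto simp: ladder_X_def ladder_incr_def numeral_2_eq_2 less_Suc_eq)
  then show ?case
    using Suc.IH by (simp add: ladder_S_def ladder_walk_Suc del: ladder_walk.simps(2))
qed

lemma measurable_ladder_walk [measurable]:
  "(\<lambda>w. ladder_walk s b w n) \<in> measurable (stream_space (measure_pmf P)) (count_space UNIV)"
proof (induction n arbitrary: s b)
  case (Suc n)
  have [measurable]: "Measurable.pred (stream_space (measure_pmf P)) shd"
    by (rule measurable_compose[OF measurable_shd]) simp
  have "(\<lambda>w. ladder_walk s b w (Suc n)) = (\<lambda>w. if shd w
      then ladder_walk (s + ladder_incr b True) True (stl w) n
      else ladder_walk (s + ladder_incr b False) False (stl w) n)"
    by (auto simp: fun_eq_iff)
  then show ?case
    by (simp only:) (intro measurable_If measurable_compose[OF measurable_stl Suc.IH]; simp)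
qed simp

lemma prob_space_xi_seq: "prob_space (xi_seq p)"
  unfolding xi_seq_def by (rule prob_space.prob_space_stream_space[OF prob_space_measure_pmf])

lemma space_xi_seq: "space (xi_seq p) = UNIV"
  by (simp add: xi_seq_def space_stream_space streams_UNIV)

primrec hit_prob :: "real \<Rightarrow> (int \<Rightarrow> bool) \<Rightarrow> nat \<Rightarrow> int \<Rightarrow> bool \<Rightarrow> real" where
  "hit_prob p A 0 s b = (if A s then 1 else 0)"
| "hit_prob p A (Suc N) s b = (if A s then 1 else
     p * hit_prob p A N (s + ladder_incr b True) True + (1 - p) * hit_prob p A N (s - 1) False)"

lemma hit_prob_nonneg: "0 \<le> p \<Longrightarrow> p \<le> 1 \<Longrightarrow> 0 \<le> hit_prob p A N s b"
  by (induction N arbitrary: s b) auto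

lemma emeasure_hit_within:
  assumes p: "0 \<le> p" "p \<le> 1"
  shows "emeasure (xi_seq p) {w \<in> space (xi_seq p). \<exists>n\<le>N. A (ladder_walk s b w n)}
    = ennreal (hit_prob p A N s b)"
proof (induction N arbitrary: s b)
  case 0
  show ?case
    using prob_space.emeasure_space_1[OF prob_space_xi_seq] by simp
next
  case (Suc N)
  let ?B = "measure_pmf (bernoulli_pmf p)"
  have meas: "{w \<in> space (stream_space ?B). \<exists>n\<le>Suc N. A (ladder_walk s b w n)} \<in> sets (stream_space ?B)"
    by measurable
  have step: "{w. \<exists>n\<le>Suc N. A (ladder_walk s b (t ## w) n)}
      = (if A s then UNIV else {w. \<exists>n\<le>N. A (ladder_walk (s + ladder_incr b t) t w n)})" for t
    by (auto simp: Ex_less_Suc2 simp flip: less_Suc_eq_le)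
  have "emeasure (xi_seq p) {w. \<exists>n\<le>Suc N. A (ladder_walk s b w n)}
      = (\<integral>\<^sup>+t. emeasure (xi_seq p) {w. \<exists>n\<le>Suc N. A (ladder_walk s b (t ## w) n)} \<partial>?B)"
    using prob_space.emeasure_stream_space[OF prob_space_measure_pmf meas]
    by (simp add: xi_seq_def space_stream_space streams_UNIV)
  also have "\<dots> = (\<integral>\<^sup>+t. ennreal (if A s then 1 else hit_prob p A N (s + ladder_incr b t) t) \<partial>?B)"
    using Suc.IH prob_space.emeasure_space_1[OF prob_space_xi_seq]
    by (cases "A s") (simp_all add: step space_xi_seq)
  also have "\<dots> = ennreal (hit_prob p A (Suc N) s b)"
  proof (cases "A s")
    case True
    then show ?thesis
      using p by (simp flip: ennreal_plus)
  next
    case False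
    then show ?thesis
      using p hit_prob_nonneg[OF p]
      by (simp add: ennreal_mult' ennreal_plus mult_nonneg_nonneg mult.commute ladder_incr_def)
  qed
  finally show ?case
    by (simp add: space_xi_seq)
qed

lemma hit_prob_le_measure_ever_hits:
  assumes p: "0 \<le> p" "p \<le> 1" and "\<not> A s"
  shows "hit_prob p A N s b
    \<le> measure (xi_seq p) {w \<in> space (xi_seq p). \<exists>n\<ge>1. A (ladder_walk s b w n)}"
proof -
  interpret prob_space "xi_seq p"
    by (rule prob_space_xi_seq)
  have "hit_prob p A N s b = measure (xi_seq p) {w \<in> space (xi_seq p). \<exists>n\<le>N. A (ladder_walk s b w n)}"
    using emeasure_hit_within[OF p, of N A s b] hit_prob_nonneg[OF p, of A N s b]
    by (simp add: measure_def)
  also have "\<dots> \<le> measure (xi_seq p) {w \<in> space (xi_seq p). \<exists>n\<ge>1. A (ladder_walk s b w n)}"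
  proof (rule finite_measure_mono)
    show "{w \<in> space (xi_seq p). \<exists>n\<le>N. A (ladder_walk s b w n)}
        \<subseteq> {w \<in> space (xi_seq p). \<exists>n\<ge>1. A (ladder_walk s b w n)}"
      using \<open>\<not> A s\<close> by (auto simp: Suc_le_eq) (metis gr0I ladder_walk.simps(1))
    show "{w \<in> space (xi_seq p). \<exists>n\<ge>1. A (ladder_walk s b w n)} \<in> sets (xi_seq p)"
      unfolding xi_seq_def by measurable
  qed
  finally show ?thesis .
qed

text \<open>The probability of staying strictly inside (lo, hi) for N steps: the error term of
  optional stopping.\<close>

primrec stay_prob :: "real \<Rightarrow> int \<Rightarrow> int \<Rightarrow> nat \<Rightarrow> int \<Rightarrow> bool \<Rightarrow> real" where
  "stay_prob p lo hi 0 s b = (if lo < s \<and> s < hi then 1 else 0)"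
| "stay_prob p lo hi (Suc N) s b = (if lo < s \<and> s < hi then
     p * stay_prob p lo hi N (s + ladder_incr b True) True + (1 - p) * stay_prob p lo hi N (s - 1) False
     else 0)"

lemma stay_prob_outside: "\<not> (lo < s \<and> s < hi) \<Longrightarrow> stay_prob p lo hi N s b = 0"
  by (cases N) auto

lemma stay_prob_le_bound:
  assumes p: "0 \<le> p" "p \<le> 1" and B: "0 \<le> B" and bound: "\<And>s b. stay_prob p lo hi N s b \<le> B"
  shows "stay_prob p lo hi (N + j) s b \<le> B"
proof (induction j arbitrary: s b)
  case (Suc j)
  show ?case
    using Suc.IH p B by (auto intro: convex_bound_le)
qed (simp add: bound)

lemma stay_prob_decay:
  assumes p: "0 \<le> p" "p \<le> 1" and B: "0 \<le> B" and bound: "\<And>s b. stay_prob p lo hi N s b \<le> B"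
  shows "s - int j \<le> lo \<Longrightarrow> stay_prob p lo hi (N + j) s b \<le> B * (1 - (1 - p) ^ j)"
proof (induction j arbitrary: s b)
  case 0
  then show ?case by (simp add: stay_prob_outside)
next
  case (Suc j)
  show ?case
  proof (cases "lo < s \<and> s < hi")
    case False
    have "(1 - p) ^ Suc j \<le> 1"
      using p by (intro power_le_one) auto
    then show ?thesis
      using B by (simp add: stay_prob_outside[OF False] del: stay_prob.simps)
  next
    case True
    have up: "stay_prob p lo hi (N + j) (s + ladder_incr b True) True \<le> B"
      by (rule stay_prob_le_bound[OF p B bound])
    have down: "stay_prob p lo hi (N + j) (s - 1) False \<le> B * (1 - (1 - p) ^ j)"
      using Suc by simp
    have "stay_prob p lo hi (N + Suc j) s b
        \<le> p * B + (1 - p) * (B * (1 - (1 - p) ^ j))"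
      using True p by (simp add: add_mono mult_left_mono up down)
    also have "\<dots> = B * (1 - (1 - p) ^ Suc j)"
      by (simp add: algebra_simps)
    finally show ?thesis .
  qed
qed

lemma stay_prob_le_power:
  assumes p: "0 \<le> p" "p \<le> 1" and "lo < hi"
  shows "stay_prob p lo hi (k * nat (hi - lo)) s b \<le> (1 - (1 - p) ^ nat (hi - lo)) ^ k"
proof (induction k arbitrary: s b)
  case (Suc k)
  define c where "c = 1 - (1 - p) ^ nat (hi - lo)"
  have c: "0 \<le> c"
    using p by (simp add: c_def power_le_one)
  have "stay_prob p lo hi (k * nat (hi - lo) + nat (hi - lo)) s b \<le> c ^ k * c"
  proof (cases "lo < s \<and> s < hi")
    case True
    then show ?thesis
      using \<open>lo < hi\<close> stay_prob_decay[OF p zero_le_power[OF c] Suc.IH[unfolded c_def[symmetric]]]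
      by (simp add: c_def)
  next
    case False
    then show ?thesis
      using c by (simp add: stay_prob_outside)
  qed
  then show ?case
    by (simp add: c_def add.commute mult.commute)
qed simp

text \<open>Optional stopping on finite horizons: phi is harmonic, nonnegative on the region Dom that the
  chain cannot leave before exiting (lo, hi), and at least D wherever the chain exits without
  hitting A.\<close>

lemma hit_prob_ge_harmonic:
  assumes p: "0 \<le> p" "p \<le> 1" and D: "0 < D"
    and harmonic: "\<And>s b. p * \<phi> (s + ladder_incr b True) True + (1 - p) * \<phi> (s - 1) False = \<phi> s b"
    and Dom_closed: "\<And>s b. Dom s \<Longrightarrow> lo < s \<Longrightarrow> s < hi \<Longrightarrow> \<not> A s \<Longrightarrow> Dom (s + ladder_incr b True) \<and> Dom (s - 1)"
    and nonneg: "\<And>s b. Dom s \<Longrightarrow> 0 \<le> \<phi> s b"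
    and exit: "\<And>s b. Dom s \<Longrightarrow> \<not> A s \<Longrightarrow> \<not> (lo < s \<and> s < hi) \<Longrightarrow> D \<le> \<phi> s b"
    and A_outside: "\<And>s. A s \<Longrightarrow> \<not> (lo < s \<and> s < hi)"
  shows "Dom s \<Longrightarrow> 1 - \<phi> s b / D - stay_prob p lo hi N s b \<le> hit_prob p A N s b"
proof (induction N arbitrary: s b)
  case 0
  then show ?case
    using nonneg[OF 0] exit[OF 0] A_outside[of s] D by auto
next
  case (Suc N)
  consider "A s" | "\<not> A s" "\<not> (lo < s \<and> s < hi)" | "\<not> A s" "lo < s" "s < hi"
    by blast
  then show ?case
  proof cases
    case 1
    then show ?thesis
      using nonneg[OF Suc.prems] D A_outside by (simp add: stay_prob_outside del: stay_prob.simps)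
  next
    case 2
    then have "1 \<le> \<phi> s b / D"
      using exit[OF Suc.prems] D by simp
    then show ?thesis
      using 2 hit_prob_nonneg[OF p, of A "Suc N" s b]
      by (simp add: stay_prob_outside del: stay_prob.simps hit_prob.simps)
  next
    case 3
    let ?u = "s + ladder_incr b True" and ?d = "s - 1"
    have "Dom ?u" "Dom ?d"
      using Dom_closed[OF Suc.prems] 3 by auto
    then have "p * (1 - \<phi> ?u True / D - stay_prob p lo hi N ?u True)
          + (1 - p) * (1 - \<phi> ?d False / D - stay_prob p lo hi N ?d False)
        \<le> p * hit_prob p A N ?u True + (1 - p) * hit_prob p A N ?d False"
      using Suc.IH p by (intro add_mono mult_left_mono) auto
    moreover have "p * (1 - \<phi> ?u True / D - stay_prob p lo hi N ?u True)
          + (1 - p) * (1 - \<phi> ?d False / D - stay_prob p lo hi N ?d False)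
        = 1 - (p * \<phi> ?u True + (1 - p) * \<phi> ?d False) / D
          - (p * stay_prob p lo hi N ?u True + (1 - p) * stay_prob p lo hi N ?d False)"
      using D by (simp add: field_simps)
    ultimately show ?thesis
      using 3 harmonic[of s b] by simp
  qed
qed

text \<open>The identity p^2 + 2p = 1 enters the proof only here: it makes the expected increment of
  s + p [b] vanish in both states b.\<close>

definition ladder_mart :: "real \<Rightarrow> int \<Rightarrow> bool \<Rightarrow> real" where
  "ladder_mart p s b = real_of_int s + (if b then p else 0)"

lemma ladder_mart_harmonic:
  assumes "p\<^sup>2 + 2 * p = 1"
  shows "p * ladder_mart p (s + ladder_incr b True) True + (1 - p) * ladder_mart p (s - 1) False
    = ladder_mart p s b"
  using assms by (cases b) (simp_all add: ladder_mart_def ladder_incr_def algebra_simps power2_eq_square)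

lemma hit_prob_down_bound:
  fixes x :: int and M :: nat
  assumes p: "0 \<le> p" "p \<le> 1" "p\<^sup>2 + 2 * p = 1" and "0 < x" "0 < M"
  shows "1 - real_of_int x / (real M + real_of_int x) - (1 - (1 - p) ^ nat (int M + x)) ^ k
    \<le> hit_prob p (\<lambda>s. s \<le> -x) (k * nat (int M + x)) 0 False"
proof -
  let ?N = "k * nat (int M + x)"
  have "1 - (ladder_mart p 0 False + x) / real_of_int (int M + x) - stay_prob p (-x) (int M) ?N 0 False
      \<le> hit_prob p (\<lambda>s. s \<le> -x) ?N 0 False"
  proof (rule hit_prob_ge_harmonic[OF p(1,2), where Dom = "\<lambda>s. -x \<le> s"])
    show "p * (ladder_mart p (s + ladder_incr b True) True + x) + (1 - p) * (ladder_mart p (s - 1) False + x)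
        = ladder_mart p s b + x" for s b
      using ladder_mart_harmonic[OF p(3), of s b] by (simp add: algebra_simps)
    show "0 \<le> ladder_mart p s b + x" if "-x \<le> s" for s b
      using that p by (simp add: ladder_mart_def)
    show "real_of_int (int M + x) \<le> ladder_mart p s b + x"
      if "\<not> s \<le> -x" "\<not> (-x < s \<and> s < int M)" for s b
      using that p by (simp add: ladder_mart_def)
  qed (use assms in \<open>auto simp: ladder_incr_def\<close>)
  moreover have "stay_prob p (-x) (int M) ?N 0 False \<le> (1 - (1 - p) ^ nat (int M + x)) ^ k"
    using stay_prob_le_power[OF p(1,2), of "-x" "int M" k 0 False] assms by simp
  ultimately show ?thesis
    by (simp add: ladder_mart_def)
qed

lemma hit_prob_up_bound:
  fixes x :: int and M :: nat
  assumes p: "0 \<le> p" "p \<le> 1" "p\<^sup>2 + 2 * p = 1" and "0 < x" "0 < M"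
  shows "1 - real_of_int (x + 2) / (real M + real_of_int (x + 1)) - (1 - (1 - p) ^ nat (int M + x)) ^ k
    \<le> hit_prob p (\<lambda>s. x \<le> s) (k * nat (int M + x)) 0 False"
proof -
  let ?N = "k * nat (int M + x)"
  have "1 - (x + 2 - ladder_mart p 0 False) / real_of_int (int M + x + 1) - stay_prob p (- int M) x ?N 0 False
      \<le> hit_prob p (\<lambda>s. x \<le> s) ?N 0 False"
  proof (rule hit_prob_ge_harmonic[OF p(1,2), where Dom = "\<lambda>s. s \<le> x + 1"])
    show "p * (x + 2 - ladder_mart p (s + ladder_incr b True) True) + (1 - p) * (x + 2 - ladder_mart p (s - 1) False)
        = x + 2 - ladder_mart p s b" for s b
      using ladder_mart_harmonic[OF p(3), of s b] by (simp add: algebra_simps)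
    show "0 \<le> x + 2 - ladder_mart p s b" if "s \<le> x + 1" for s b
      using that p by (simp add: ladder_mart_def)
    show "real_of_int (int M + x + 1) \<le> x + 2 - ladder_mart p s b"
      if "s \<le> x + 1" "\<not> x \<le> s" "\<not> (- int M < s \<and> s < x)" for s b
      using that p by (simp add: ladder_mart_def)
  qed (use assms in \<open>auto simp: ladder_incr_def\<close>)
  moreover have "stay_prob p (- int M) x ?N 0 False \<le> (1 - (1 - p) ^ nat (int M + x)) ^ k"
    using stay_prob_le_power[OF p(1,2), of "- int M" x k 0 False] assms by (simp add: add.commute)
  ultimately show ?thesis
    by (simp add: ladder_mart_def add.commute add.left_commute)
qed

lemma one_le_of_lower_bounds:
  fixes a a' \<mu> :: real and c :: "nat \<Rightarrow> real"
  assumes "0 \<le> a" "0 \<le> a'" "\<And>M. 0 \<le> c M" "\<And>M. c M < 1"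
    and bound: "\<And>M k. 0 < M \<Longrightarrow> 1 - a / (real M + a') - c M ^ k \<le> \<mu>"
  shows "1 \<le> \<mu>"
proof (rule LIMSEQ_le_const2)
  have "LIM M sequentially. real M + a' :> at_top"
    by (subst add.commute) (rule filterlim_tendsto_add_at_top[OF tendsto_const filterlim_real_sequentially])
  then have "(\<lambda>M. a / (real M + a')) \<longlonglongrightarrow> 0"
    by (intro tendsto_divide_0[OF tendsto_const] filterlim_at_top_imp_at_infinity)
  then show "(\<lambda>M. 1 - a / (real M + a')) \<longlonglongrightarrow> 1"
    using tendsto_diff[OF tendsto_const] by fastforce
  have "1 - a / (real M + a') \<le> \<mu>" if "0 < M" for M
  proof (rule LIMSEQ_le_const2)
    show "(\<lambda>k. 1 - a / (real M + a') - c M ^ k) \<longlonglongrightarrow> 1 - a / (real M + a')"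
      using assms(3,4)[of M] by (auto intro!: tendsto_eq_intros LIMSEQ_power_zero)
  qed (use bound that in auto)
  then show "\<exists>N. \<forall>M\<ge>N. 1 - a / (real M + a') \<le> \<mu>"
    by (intro exI[of _ 1]) auto
qed

theorem theorem4p3:
  fixes x :: int
  assumes "x > 0"
  defines "p \<equiv> sqrt 2 - 1"
  shows "measure (xi_seq p) {w \<in> space (xi_seq p). \<exists>n\<ge>1. ladder_S 2 2 w n \<ge> x} = 1
       \<and> measure (xi_seq p) {w \<in> space (xi_seq p). \<exists>n\<ge>1. ladder_S 2 2 w n \<le> - x} = 1"
proof -
  have "1 < sqrt (2::real)" "sqrt (2::real) < 2"
    by (simp_all add: real_less_lsqrt)
  then have p: "0 \<le> p" "p \<le> 1" "p\<^sup>2 + 2 * p = 1" and "0 < 1 - p"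
    by (simp_all add: p_def power2_eq_square algebra_simps)
  then have c: "0 \<le> 1 - (1 - p) ^ n" "1 - (1 - p) ^ n < 1" for n
    by (simp_all add: power_le_one)
  interpret prob_space "xi_seq p"
    by (rule prob_space_xi_seq)
  have "1 \<le> measure (xi_seq p) {w \<in> space (xi_seq p). \<exists>n\<ge>1. x \<le> ladder_walk 0 False w n}"
    using order_trans[OF hit_prob_up_bound[OF p assms(1)] hit_prob_le_measure_ever_hits[OF p(1,2)]]
      assms(1)
    by (intro one_le_of_lower_bounds[OF _ _ c, where a = "of_int (x + 2)" and a' = "of_int (x + 1)"]) auto
  moreover have "1 \<le> measure (xi_seq p) {w \<in> space (xi_seq p). \<exists>n\<ge>1. ladder_walk 0 False w n \<le> -x}"
    using order_trans[OF hit_prob_down_bound[OF p assms(1)] hit_prob_le_measure_ever_hits[OF p(1,2)]]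
      assms(1)
    by (intro one_le_of_lower_bounds[OF _ _ c, where a = "of_int x" and a' = "of_int x"]) auto
  ultimately show ?thesis
    using prob_le_1 by (simp add: ladder_S_eq_walk antisym)
qed

end
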